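(* Let $1\le p_0<\infty$, $0<t_0<\infty$, and let $f,g\in L^{p_0}(0,\infty)$ satisfy $f^*(t_0)>g^*(t_0)$ and $f^*(t)\ge g^*(t)$ for all $0<t<t_0$. Suppose that the set $\mathcal P:=\{p>0:\ |f|^p-|g|^p\in L^1(0,\infty)\}$ is unbounded. Then there exists $P_1$ such that for all $p\in\mathcal P$ with $p\ge P_1$, \[ \int_0^\infty(|f(t)|^p-|g(t)|^p)\,dt>0 . \]
   Context: $f^*$ denotes the nonincreasing rearrangement of a measurable function $f$ on $(0,\infty)$ with Lebesgue measure: $f^*(s)=\inf\{\tau>0:|\{|f|>\tau\}|\le s\}$. *)

theory Defs
  imports "HOL-Analysis.Analysis"
begin

definition rearr :: "(real \<Rightarrow> real) \<Rightarrow> real \<Rightarrow> real" where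
  "rearr f s = Inf {\<tau>::real. \<tau> > 0 \<and>
      emeasure lebesgue {t \<in> {0<..}. \<tau> < \<bar>f t\<bar>} \<le> ennreal s}"

definition in_Lp :: "real \<Rightarrow> (real \<Rightarrow> real) \<Rightarrow> bool" where
  "in_Lp p f \<longleftrightarrow> set_borel_measurable lebesgue {0<..} f \<and>
      set_integrable lebesgue {0<..} (\<lambda>t. \<bar>f t\<bar> powr p)"

end

theory Submission
  imports Defs
begin

text \<open>
  Pick levels g*(t0) < c1 < c2 < f*(t0). Then |{|g| > c1}| \<le> t0 < |{|f| > c2}|, and the
  hypothesis f* \<ge> g* on (0, t0) becomes |{|g| > \<tau>}| \<le> |{|f| > \<tau>}| for all \<tau> \<ge> c1.
  Split |g|^p at height c1: where |g| \<le> c1 it is at most c1^(p - p0) |g|^p0, and by the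
  layer-cake formula the integral of |g|^p over {|g| > c1} is exceeded by the integral of |f|^p
  by at least \<epsilon> c2^p, where \<epsilon> = |{|f| > c2}| - t0 > 0. Hence
  \<integral>(|f|^p - |g|^p) \<ge> \<epsilon> c2^p - c1^(p - p0) \<integral>|g|^p0, which is positive once (c2/c1)^p is large.
  As |f|^p and |g|^p need not be integrable separately, the comparison is made for the
  truncations min(|f|^p, N) and min(|g|^p, N), letting N \<rightarrow> \<infinity> afterwards.
\<close>

section \<open>Distribution function and nonincreasing rearrangement\<close>

definition superlevel :: "(real \<Rightarrow> real) \<Rightarrow> real \<Rightarrow> real set" where
  "superlevel h \<tau> = {t \<in> {0<..}. \<tau> < \<bar>h t\<bar>}"

text \<open>|h| extended by zero from (0, \<infinity>) to the real line, so that set integrals over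
  (0, \<infinity>) become integrals over the whole line.\<close>

definition abs_on_pos :: "(real \<Rightarrow> real) \<Rightarrow> real \<Rightarrow> real" where
  "abs_on_pos h x = (if 0 < x then \<bar>h x\<bar> else 0)"

lemma rearr_eq_Inf_superlevel:
  "rearr h s = Inf {\<tau>. 0 < \<tau> \<and> emeasure lebesgue (superlevel h \<tau>) \<le> ennreal s}"
  unfolding rearr_def superlevel_def by (simp add: conj_commute)

lemma superlevel_antimono: "\<tau> \<le> \<sigma> \<Longrightarrow> superlevel h \<sigma> \<subseteq> superlevel h \<tau>"
  unfolding superlevel_def by auto

lemma abs_on_pos_nonneg: "0 \<le> abs_on_pos h x"
  by (simp add: abs_on_pos_def)

lemma abs_on_pos_powr: "abs_on_pos h x powr p = indicator {0<..} x * \<bar>h x\<bar> powr p"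
  by (simp add: abs_on_pos_def)

lemma superlevel_eq_abs_on_pos: "superlevel h \<tau> = {0<..} \<inter> {x. \<tau> < abs_on_pos h x}"
  by (auto simp: superlevel_def abs_on_pos_def)

lemma superlevel_eq_abs_on_pos_nonneg: "0 \<le> \<tau> \<Longrightarrow> {x. \<tau> < abs_on_pos h x} = superlevel h \<tau>"
  by (auto simp: superlevel_def abs_on_pos_def split: if_splits)

lemma borel_measurable_abs_on_pos:
  assumes "in_Lp q h"
  shows "abs_on_pos h \<in> borel_measurable lebesgue"
proof -
  have "(\<lambda>x. indicator {0<..} x *\<^sub>R h x) \<in> borel_measurable lebesgue"
    using assms by (simp add: in_Lp_def set_borel_measurable_def)
  then have "(\<lambda>x. \<bar>indicator {0<..} x *\<^sub>R h x\<bar>) \<in> borel_measurable lebesgue"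
    by (rule borel_measurable_abs)
  moreover have "abs_on_pos h = (\<lambda>x. \<bar>indicator {0<..} x *\<^sub>R h x\<bar>)"
    by (auto simp: abs_on_pos_def fun_eq_iff)
  ultimately show ?thesis by simp
qed

lemma integrable_abs_on_pos_powr:
  assumes "in_Lp q h"
  shows "integrable lebesgue (\<lambda>x. abs_on_pos h x powr q)"
  using assms by (simp add: in_Lp_def set_integrable_def abs_on_pos_powr)

lemma sets_superlevel:
  assumes "in_Lp q h"
  shows "superlevel h \<tau> \<in> sets lebesgue"
proof -
  have "{x. \<tau> < abs_on_pos h x} \<in> sets lebesgue"
    using borel_measurable_abs_on_pos[OF assms] unfolding borel_measurable_iff_greater by simp
  then show ?thesis
    unfolding superlevel_eq_abs_on_pos by (intro sets.Int) auto
qed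

lemma emeasure_superlevel_mono:
  "in_Lp q h \<Longrightarrow> \<tau> \<le> \<sigma> \<Longrightarrow> emeasure lebesgue (superlevel h \<sigma>) \<le> emeasure lebesgue (superlevel h \<tau>)"
  by (intro emeasure_mono superlevel_antimono sets_superlevel)

lemma emeasure_superlevel_Markov:
  assumes "in_Lp q h" "0 < q" "0 < \<tau>"
  shows "emeasure lebesgue (superlevel h \<tau>)
    \<le> ennreal ((\<integral>x. abs_on_pos h x powr q \<partial>lebesgue) / \<tau> powr q)"
proof -
  let ?u = "\<lambda>x. abs_on_pos h x powr q"
  have "superlevel h \<tau> \<subseteq> {x \<in> space lebesgue. \<tau> powr q \<le> ?u x}"
    using assms(2,3) by (auto simp: superlevel_def abs_on_pos_def intro!: powr_mono2)
  then have "emeasure lebesgue (superlevel h \<tau>) \<le> emeasure lebesgue {x \<in> space lebesgue. \<tau> powr q \<le> ?u x}"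
    using borel_measurable_abs_on_pos[OF assms(1)] by (intro emeasure_mono) measurable
  also have "\<dots> \<le> ennreal ((1 / \<tau> powr q) * (\<integral>x. ?u x \<partial>lebesgue))"
    using integrable_abs_on_pos_powr[OF assms(1)] assms(3) by (intro integral_Markov_inequality) auto
  finally show ?thesis
    by simp
qed

lemma emeasure_superlevel_finite:
  assumes "in_Lp q h" "0 < q" "0 < \<tau>"
  shows "emeasure lebesgue (superlevel h \<tau>) < \<infinity>"
  by (rule le_less_trans[OF emeasure_superlevel_Markov[OF assms]]) simp

lemma emeasure_superlevel_small:
  assumes "in_Lp q h" "0 < q" "0 < s"
  obtains \<tau> where "0 < \<tau>" "emeasure lebesgue (superlevel h \<tau>) \<le> ennreal s"
proof
  define K where "K = (\<integral>x. abs_on_pos h x powr q \<partial>lebesgue)"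
  have "0 \<le> K"
    unfolding K_def by (simp add: integral_nonneg_AE)
  have "0 < K / s + 1"
    using \<open>0 \<le> K\<close> assms(3) by (intro add_nonneg_pos divide_nonneg_pos) auto
  define \<tau> where "\<tau> = (K / s + 1) powr (1 / q)"
  have \<tau>_powr: "\<tau> powr q = K / s + 1"
    using \<open>0 < K / s + 1\<close> assms(2) by (simp add: \<tau>_def powr_powr)
  show "0 < \<tau>"
    using \<open>0 < K / s + 1\<close> by (simp add: \<tau>_def)
  have "K / \<tau> powr q \<le> s"
    using \<open>0 \<le> K\<close> assms(3) by (simp add: \<tau>_powr field_simps)
  then show "emeasure lebesgue (superlevel h \<tau>) \<le> ennreal s"
    using emeasure_superlevel_Markov[OF assms(1,2) \<open>0 < \<tau>\<close>] unfolding K_def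
    by (metis ennreal_leI order_trans)
qed

lemma rearr_le:
  "0 < \<tau> \<Longrightarrow> emeasure lebesgue (superlevel h \<tau>) \<le> ennreal s \<Longrightarrow> rearr h s \<le> \<tau>"
  unfolding rearr_eq_Inf_superlevel by (rule cInf_lower) (auto intro: bdd_belowI[of _ 0])

lemma rearr_ge:
  assumes "in_Lp q h" "0 < q" "0 < s"
    and "\<And>\<rho>. 0 < \<rho> \<Longrightarrow> emeasure lebesgue (superlevel h \<rho>) \<le> ennreal s \<Longrightarrow> \<sigma> \<le> \<rho>"
  shows "\<sigma> \<le> rearr h s"
  unfolding rearr_eq_Inf_superlevel
proof (rule cInf_greatest)
  obtain \<tau> where "0 < \<tau>" "emeasure lebesgue (superlevel h \<tau>) \<le> ennreal s"
    using emeasure_superlevel_small[OF assms(1-3)] .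
  then show "{\<tau>. 0 < \<tau> \<and> emeasure lebesgue (superlevel h \<tau>) \<le> ennreal s} \<noteq> {}"
    by blast
qed (use assms(4) in blast)

lemma emeasure_superlevel_right_continuous:
  assumes "in_Lp q h" "m < emeasure lebesgue (superlevel h \<tau>)"
  obtains \<sigma> where "\<tau> < \<sigma>" "m < emeasure lebesgue (superlevel h \<sigma>)"
proof -
  define A where "A i = superlevel h (\<tau> + 1 / Suc i)" for i :: nat
  have "incseq A"
    unfolding A_def by (intro monoI superlevel_antimono) (simp add: frac_le)
  have "range A \<subseteq> sets lebesgue"
    using sets_superlevel[OF assms(1)] by (auto simp: A_def)
  have "(\<Union>i. A i) = superlevel h \<tau>"
  proof
    show "(\<Union>i. A i) \<subseteq> superlevel h \<tau>"
      unfolding A_def by (intro UN_least superlevel_antimono) simp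
    show "superlevel h \<tau> \<subseteq> (\<Union>i. A i)"
    proof
      fix x assume x: "x \<in> superlevel h \<tau>"
      then obtain n :: nat where "1 / Suc n < \<bar>h x\<bar> - \<tau>"
        using nat_approx_posE[of "\<bar>h x\<bar> - \<tau>"] by (auto simp: superlevel_def)
      then have "x \<in> A n"
        using x by (auto simp: A_def superlevel_def)
      then show "x \<in> (\<Union>i. A i)" by blast
    qed
  qed
  then have "(SUP i. emeasure lebesgue (A i)) = emeasure lebesgue (superlevel h \<tau>)"
    using SUP_emeasure_incseq[OF \<open>range A \<subseteq> sets lebesgue\<close> \<open>incseq A\<close>] by (simp only:)
  then have "m < (SUP i. emeasure lebesgue (A i))"
    using assms(2) by (simp only:)
  then obtain i where "m < emeasure lebesgue (A i)"
    unfolding less_SUP_iff by blast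
  then show ?thesis
    by (intro that[of "\<tau> + 1 / Suc i"]) (auto simp: A_def)
qed

lemma emeasure_superlevel_le_if_rearr_le:
  assumes f: "in_Lp q f" and g: "in_Lp q g" and "0 < q"
    and rearr_dominated: "\<And>t. 0 < t \<Longrightarrow> t < t0 \<Longrightarrow> rearr g t \<le> rearr f t"
    and "0 < \<tau>" and g_small: "emeasure lebesgue (superlevel g \<tau>) \<le> ennreal t0"
  shows "emeasure lebesgue (superlevel g \<tau>) \<le> emeasure lebesgue (superlevel f \<tau>)"
  \<comment> \<open>Otherwise a level t strictly between the two measures gives f*(t) \<le> \<tau>, while right
    continuity of the distribution function of g forces g*(t) > \<tau>.\<close>
proof (rule ccontr)
  assume "\<not> ?thesis"
  then have "emeasure lebesgue (superlevel f \<tau>) < emeasure lebesgue (superlevel g \<tau>)"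
    by simp
  then obtain z where z: "emeasure lebesgue (superlevel f \<tau>) < z" "z < emeasure lebesgue (superlevel g \<tau>)"
    using dense by blast
  then have "z < top"
    using g_small by (simp add: less_le_trans)
  then obtain t where t: "z = ennreal t" "0 \<le> t"
    by (auto simp: less_top_ennreal)
  have "0 < t"
    using z t by (auto simp: less_le)
  have "ennreal t < ennreal t0"
    using z(2) g_small t(1) by (simp add: less_le_trans)
  then have "t < t0"
    using t(2) by (simp add: ennreal_less_iff)
  have "rearr f t \<le> \<tau>"
    using z(1) t(1) \<open>0 < \<tau>\<close> by (intro rearr_le) simp_all
  obtain \<sigma> where "\<tau> < \<sigma>" and \<sigma>: "ennreal t < emeasure lebesgue (superlevel g \<sigma>)"
    using emeasure_superlevel_right_continuous[OF g] z(2) t(1) by blast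
  have "\<sigma> \<le> rearr g t"
  proof (rule rearr_ge[OF g \<open>0 < q\<close> \<open>0 < t\<close>])
    fix \<rho> assume \<rho>: "0 < \<rho>" "emeasure lebesgue (superlevel g \<rho>) \<le> ennreal t"
    show "\<sigma> \<le> \<rho>"
    proof (rule ccontr)
      assume "\<not> \<sigma> \<le> \<rho>"
      then have "emeasure lebesgue (superlevel g \<sigma>) \<le> emeasure lebesgue (superlevel g \<rho>)"
        by (intro emeasure_superlevel_mono[OF g]) simp
      then show False
        using \<sigma> \<rho>(2) by (meson leD order_trans)
    qed
  qed
  then show False
    using rearr_dominated[OF \<open>0 < t\<close> \<open>t < t0\<close>] \<open>rearr f t \<le> \<tau>\<close> \<open>\<tau> < \<sigma>\<close> by linarith
qed

lemma levels_between_rearr: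
  assumes f: "in_Lp q f" and g: "in_Lp q g" and "0 < q" "0 < t0"
    and "rearr g t0 < rearr f t0"
    and rearr_dominated: "\<And>t. 0 < t \<Longrightarrow> t < t0 \<Longrightarrow> rearr g t \<le> rearr f t"
  obtains c1 c2 \<epsilon> where "0 < c1" "c1 < c2" "0 < \<epsilon>"
    and "\<And>\<tau>. c1 \<le> \<tau> \<Longrightarrow> emeasure lebesgue (superlevel g \<tau>) \<le> emeasure lebesgue (superlevel f \<tau>)"
    and "emeasure lebesgue (superlevel g c1) + ennreal \<epsilon> \<le> emeasure lebesgue (superlevel f c2)"
proof -
  define S where "S h = {\<tau>. 0 < \<tau> \<and> emeasure lebesgue (superlevel h \<tau>) \<le> ennreal t0}" for h
  have "S g \<noteq> {}"
    using emeasure_superlevel_small[OF g \<open>0 < q\<close> \<open>0 < t0\<close>] unfolding S_def by blast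
  moreover have "Inf (S g) < Inf (S f)"
    using assms(5) unfolding rearr_eq_Inf_superlevel S_def .
  ultimately obtain c1 where "c1 \<in> S g" "c1 < Inf (S f)"
    using cInf_lessD by blast
  then have "0 < c1" and g_c1: "emeasure lebesgue (superlevel g c1) \<le> ennreal t0"
    by (auto simp: S_def)
  have dominated: "emeasure lebesgue (superlevel g \<tau>) \<le> emeasure lebesgue (superlevel f \<tau>)"
    if "c1 \<le> \<tau>" for \<tau>
  proof (rule emeasure_superlevel_le_if_rearr_le[OF f g \<open>0 < q\<close> rearr_dominated])
    show "0 < \<tau>"
      using \<open>0 < c1\<close> that by linarith
    show "emeasure lebesgue (superlevel g \<tau>) \<le> ennreal t0"
      using emeasure_superlevel_mono[OF g that] g_c1 by (rule order_trans)
  qed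
  define c2 where "c2 = (c1 + Inf (S f)) / 2"
  have "c1 < c2" "0 < c2" "c2 < Inf (S f)"
    using \<open>c1 < Inf (S f)\<close> \<open>0 < c1\<close> by (auto simp: c2_def)
  have "c2 \<notin> S f"
    using \<open>c2 < Inf (S f)\<close> cInf_lower[of c2 "S f"] by (force simp: S_def intro: bdd_belowI[of _ 0])
  then have "ennreal t0 < emeasure lebesgue (superlevel f c2)"
    using \<open>0 < c2\<close> by (simp add: S_def not_le)
  moreover obtain m where m: "emeasure lebesgue (superlevel f c2) = ennreal m" "0 \<le> m"
    using emeasure_superlevel_finite[OF f \<open>0 < q\<close> \<open>0 < c2\<close>] by (auto simp: less_top_ennreal)
  ultimately have "t0 < m"
    using \<open>0 < t0\<close> by (simp add: ennreal_less_iff)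
  have "emeasure lebesgue (superlevel g c1) + ennreal (m - t0) \<le> ennreal t0 + ennreal (m - t0)"
    using g_c1 by (rule add_right_mono)
  also have "\<dots> = emeasure lebesgue (superlevel f c2)"
    using \<open>0 < t0\<close> \<open>t0 < m\<close> m(1) by (simp flip: ennreal_plus)
  finally show ?thesis
    using \<open>0 < c1\<close> \<open>c1 < c2\<close> \<open>t0 < m\<close> dominated by (intro that[of c1 c2 "m - t0"]) simp_all
qed

section \<open>Layer-cake comparison of truncated power integrals\<close>

lemma sigma_finite_lebesgue: "sigma_finite_measure (lebesgue :: real measure)"
proof
  let ?A = "range (\<lambda>n::nat. {-real n..real n})"
  have "x \<in> \<Union>?A" for x
  proof -
    obtain n :: nat where "\<bar>x\<bar> \<le> real n" using real_arch_simple by blast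
    then show ?thesis by (auto intro!: exI[of _ n])
  qed
  then have "\<Union>?A = UNIV" by blast
  then show "\<exists>A::real set set. countable A \<and> A \<subseteq> sets lebesgue \<and> \<Union>A = space lebesgue
      \<and> (\<forall>a\<in>A. emeasure lebesgue a \<noteq> \<infinity>)"
    by (intro exI[of _ ?A]) auto
qed

lemma nn_integral_layer_cake:
  fixes w :: "real \<Rightarrow> real"
  assumes w: "w \<in> borel_measurable lebesgue" "\<And>x. 0 \<le> w x"
  shows "(\<lambda>s. indicator {0..} s * emeasure lebesgue {x. s < w x}) \<in> borel_measurable lborel"
    and "(\<integral>\<^sup>+x. w x \<partial>lebesgue) = (\<integral>\<^sup>+s. indicator {0..} s * emeasure lebesgue {x. s < w x} \<partial>lborel)"
proof -
  interpret L: sigma_finite_measure "lebesgue :: real measure" by (rule sigma_finite_lebesgue)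
  interpret pair_sigma_finite "lebesgue :: real measure" lborel ..
  let ?I = "\<lambda>x s. indicator {0..<w x} s :: ennreal"
  have I_eq: "?I x s = (if 0 \<le> s \<and> s < w x then 1 else 0)" for x s
    by (simp add: indicator_def)
  have meas: "case_prod ?I \<in> borel_measurable (lebesgue \<Otimes>\<^sub>M lborel)"
    unfolding I_eq using w(1) by measurable
  have meas': "(\<lambda>(s, x). ?I x s) \<in> borel_measurable (lborel \<Otimes>\<^sub>M lebesgue)"
    unfolding I_eq using w(1) by measurable
  have inner: "(\<integral>\<^sup>+x. ?I x s \<partial>lebesgue) = indicator {0..} s * emeasure lebesgue {x. s < w x}" for s
  proof -
    have "{x \<in> space lebesgue. s < w x} \<in> sets lebesgue"
      using w(1) by measurable
    moreover have "?I x s = indicator {0..} s * indicator {x. s < w x} x" for x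
      by (simp add: indicator_def)
    ultimately show ?thesis
      by (simp add: nn_integral_cmult)
  qed
  show "(\<lambda>s. indicator {0..} s * emeasure lebesgue {x. s < w x}) \<in> borel_measurable lborel"
    using L.borel_measurable_nn_integral[OF meas'] by (simp add: inner)
  have "(\<integral>\<^sup>+x. w x \<partial>lebesgue) = (\<integral>\<^sup>+x. (\<integral>\<^sup>+s. ?I x s \<partial>lborel) \<partial>lebesgue)"
    using w(2) by (intro nn_integral_cong) simp
  also have "\<dots> = (\<integral>\<^sup>+s. (\<integral>\<^sup>+x. ?I x s \<partial>lebesgue) \<partial>lborel)"
    using Fubini'[OF meas] by simp
  finally show "(\<integral>\<^sup>+x. w x \<partial>lebesgue) = (\<integral>\<^sup>+s. indicator {0..} s * emeasure lebesgue {x. s < w x} \<partial>lborel)"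
    by (simp add: inner)
qed

lemma nn_integral_add_le_by_distribution:
  fixes u v :: "real \<Rightarrow> real" and a \<epsilon> :: real
  assumes u: "u \<in> borel_measurable lebesgue" "\<And>x. 0 \<le> u x"
    and v: "v \<in> borel_measurable lebesgue" "\<And>x. 0 \<le> v x"
    and "0 \<le> a" "0 \<le> \<epsilon>"
    and dist: "\<And>s. 0 \<le> s \<Longrightarrow>
      emeasure lebesgue {x. s < u x} + ennreal \<epsilon> * indicator {..<a} s \<le> emeasure lebesgue {x. s < v x}"
  shows "(\<integral>\<^sup>+x. u x \<partial>lebesgue) + ennreal (\<epsilon> * a) \<le> (\<integral>\<^sup>+x. v x \<partial>lebesgue)"
proof -
  have "(\<integral>\<^sup>+x. u x \<partial>lebesgue) + ennreal (\<epsilon> * a)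
      = (\<integral>\<^sup>+s. indicator {0..} s * emeasure lebesgue {x. s < u x} \<partial>lborel)
        + (\<integral>\<^sup>+s. ennreal \<epsilon> * indicator {0..<a} s \<partial>lborel)"
    using assms by (simp add: nn_integral_layer_cake nn_integral_cmult ennreal_mult)
  also have "\<dots> = (\<integral>\<^sup>+s. indicator {0..} s * emeasure lebesgue {x. s < u x}
      + ennreal \<epsilon> * indicator {0..<a} s \<partial>lborel)"
    using nn_integral_layer_cake(1)[OF u] by (intro nn_integral_add[symmetric]) auto
  also have "\<dots> \<le> (\<integral>\<^sup>+s. indicator {0..} s * emeasure lebesgue {x. s < v x} \<partial>lborel)"
    using dist by (intro nn_integral_mono) (auto simp: indicator_def)
  also have "\<dots> = (\<integral>\<^sup>+x. v x \<partial>lebesgue)"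
    using nn_integral_layer_cake(2)[OF v] by simp
  finally show ?thesis .
qed

lemma less_powr_iff_root_less:
  fixes s y p :: real
  assumes "0 \<le> s" "0 \<le> y" "0 < p"
  shows "s < y powr p \<longleftrightarrow> s powr (1/p) < y"
proof -
  define x where "x = s powr (1/p)"
  have "s = x powr p"
    using assms by (simp add: x_def powr_powr)
  moreover have "x powr p < y powr p \<longleftrightarrow> x < y"
    using powr_less_mono2[of p x y] powr_mono2[of p y x] assms by (auto simp: x_def not_less[symmetric])
  ultimately show ?thesis
    by (simp add: x_def)
qed

lemma powr_le_powr_diff_mult:
  fixes y c p q :: real
  assumes "0 \<le> y" "y \<le> c" "q \<le> p"
  shows "y powr p \<le> c powr (p - q) * y powr q"
proof (cases "y = 0")
  case False
  then have "y powr p = y powr (p - q) * y powr q"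
    by (simp add: powr_add[symmetric])
  also have "\<dots> \<le> c powr (p - q) * y powr q"
    using assms by (intro mult_right_mono powr_mono2) auto
  finally show ?thesis .
qed simp

lemma powr_dominates_eventually:
  fixes a b \<epsilon> K :: real
  assumes "0 < a" "a < b" "0 < \<epsilon>"
  obtains P where "\<And>p. P \<le> p \<Longrightarrow> K * a powr p < \<epsilon> * b powr p"
proof -
  define L where "L = ln (b / a)"
  have "0 < L"
    using assms by (simp add: L_def)
  have "K * a powr p < \<epsilon> * b powr p" if "K / (\<epsilon> * L) \<le> p" for p
  proof -
    have "K / \<epsilon> \<le> p * L"
      using that \<open>0 < L\<close> assms(3) by (simp add: field_simps)
    also have "\<dots> < exp (p * L)"
      using exp_gt_self by blast
    also have "\<dots> = (b / a) powr p"
      using assms by (simp add: L_def powr_def mult.commute)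
    finally have "K < \<epsilon> * (b / a) powr p"
      using assms(3) by (simp add: field_simps)
    then have "K * a powr p < \<epsilon> * (b / a) powr p * a powr p"
      using assms(1) by (simp add: mult_strict_right_mono)
    also have "\<dots> = \<epsilon> * b powr p"
      using assms by (simp add: powr_divide)
    finally show ?thesis .
  qed
  then show ?thesis
    by (rule that)
qed

lemma abs_min_diff_le: "\<bar>min a c - min b c\<bar> \<le> \<bar>a - b\<bar>" for a b c :: real
  by (simp add: min_def abs_if)

lemma integrable_min_diff:
  fixes u v :: "'a \<Rightarrow> real"
  assumes "u \<in> borel_measurable M" "v \<in> borel_measurable M"
    and "integrable M (\<lambda>x. u x - v x)"
  shows "integrable M (\<lambda>x. min (u x) c - min (v x) c)"
  using assms abs_min_diff_le by (intro Bochner_Integration.integrable_bound[OF assms(3)]) auto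

lemma tendsto_integral_min_diff:
  fixes u v :: "'a \<Rightarrow> real"
  assumes "u \<in> borel_measurable M" "v \<in> borel_measurable M"
    and "integrable M (\<lambda>x. u x - v x)"
  shows "(\<lambda>n. \<integral>x. min (u x) (real n) - min (v x) (real n) \<partial>M) \<longlonglongrightarrow> (\<integral>x. u x - v x \<partial>M)"
proof (rule integral_dominated_convergence[where w = "\<lambda>x. \<bar>u x - v x\<bar>"])
  show "(\<lambda>x. u x - v x) \<in> borel_measurable M"
    using assms(1,2) by measurable
  show "(\<lambda>x. min (u x) (real n) - min (v x) (real n)) \<in> borel_measurable M" for n
    using assms(1,2) by measurable
  show "integrable M (\<lambda>x. \<bar>u x - v x\<bar>)"
    using assms(3) by simp
  show "AE x in M. norm (min (u x) (real n) - min (v x) (real n)) \<le> \<bar>u x - v x\<bar>" for n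
    using abs_min_diff_le by simp
  show "AE x in M. (\<lambda>n. min (u x) (real n) - min (v x) (real n)) \<longlonglongrightarrow> u x - v x"
  proof (intro AE_I2 tendsto_eventually)
    fix x
    obtain n0 :: nat where "max (u x) (v x) \<le> real n0"
      using real_arch_simple by blast
    then show "\<forall>\<^sub>F n in sequentially. min (u x) (real n) - min (v x) (real n) = u x - v x"
      by (intro eventually_sequentiallyI[of n0]) auto
  qed
qed

definition trunc_powr_above :: "real \<Rightarrow> real \<Rightarrow> real \<Rightarrow> real \<Rightarrow> real" where
  "trunc_powr_above c p N y = (if c < y then min (y powr p) N else 0)"

lemma trunc_powr_above_nonneg: "0 \<le> N \<Longrightarrow> 0 \<le> trunc_powr_above c p N y"
  by (simp add: trunc_powr_above_def)

lemma borel_measurable_trunc_powr_above: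
  fixes H :: "real \<Rightarrow> real"
  assumes "H \<in> borel_measurable lebesgue"
  shows "(\<lambda>x. trunc_powr_above c p N (H x)) \<in> borel_measurable lebesgue"
  unfolding trunc_powr_above_def using assms by measurable

lemma min_powr_le_split:
  fixes y c p q N :: real
  assumes "0 \<le> y" "q \<le> p"
  shows "min (y powr p) N \<le> c powr (p - q) * y powr q + trunc_powr_above c p N y"
proof (cases "c < y")
  case False
  then show ?thesis
    using powr_le_powr_diff_mult[of y c q p] assms by (simp add: trunc_powr_above_def min.coboundedI1)
qed (simp add: trunc_powr_above_def \<open>0 \<le> y\<close>)

lemma less_trunc_powr_above_iff:
  fixes y s c p N :: real
  assumes "0 \<le> y" "0 \<le> s" "0 < p"
  shows "s < trunc_powr_above c p N y \<longleftrightarrow> s < N \<and> max c (s powr (1/p)) < y"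
  using less_powr_iff_root_less[OF assms(2,1,3)] assms(2) by (auto simp: trunc_powr_above_def)

lemma integrable_min_powr:
  fixes G :: "real \<Rightarrow> real"
  assumes G: "G \<in> borel_measurable lebesgue" "\<And>x. 0 \<le> G x"
    and "integrable lebesgue (\<lambda>x. G x powr q)" "q \<le> p" "0 \<le> N"
    and "emeasure lebesgue {x. c < G x} < \<infinity>"
  shows "integrable lebesgue (\<lambda>x. min (G x powr p) N)"
proof (rule Bochner_Integration.integrable_bound)
  have "{x \<in> space lebesgue. c < G x} \<in> sets lebesgue"
    using G(1) by measurable
  then show "integrable lebesgue (\<lambda>x. c powr (p - q) * G x powr q + N * indicator {x. c < G x} x)"
    using assms(3,6) by (intro Bochner_Integration.integrable_add integrable_mult_right
        integrable_real_indicator) simp_all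
  show "AE x in lebesgue. norm (min (G x powr p) N)
      \<le> norm (c powr (p - q) * G x powr q + N * indicator {x. c < G x} x)"
  proof (intro AE_I2)
    fix x
    have "trunc_powr_above c p N (G x) \<le> N * indicator {x. c < G x} x"
      by (simp add: trunc_powr_above_def assms(5))
    then have "min (G x powr p) N \<le> c powr (p - q) * G x powr q + N * indicator {x. c < G x} x"
      using min_powr_le_split[of "G x" q p N c] G(2)[of x] assms(4) by linarith
    then show "norm (min (G x powr p) N) \<le> norm (c powr (p - q) * G x powr q + N * indicator {x. c < G x} x)"
      using assms(5) by simp
  qed
  show "(\<lambda>x. min (G x powr p) N) \<in> borel_measurable lebesgue"
    using G(1) by measurable
qed

lemma emeasure_trunc_powr_above_compare:
  fixes F G :: "real \<Rightarrow> real" and p c1 c2 \<epsilon> N s :: real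
  assumes F: "F \<in> borel_measurable lebesgue" "\<And>x. 0 \<le> F x"
    and G: "G \<in> borel_measurable lebesgue" "\<And>x. 0 \<le> G x"
    and "0 < p" "0 < c1" "c1 < c2" "c2 powr p \<le> N" "0 \<le> s"
    and dominated: "\<And>\<tau>. c1 \<le> \<tau> \<Longrightarrow> emeasure lebesgue {x. \<tau> < G x} \<le> emeasure lebesgue {x. \<tau> < F x}"
    and gap: "emeasure lebesgue {x. c1 < G x} + ennreal \<epsilon> \<le> emeasure lebesgue {x. c2 < F x}"
  shows "emeasure lebesgue {x. s < trunc_powr_above c1 p N (G x)} + ennreal \<epsilon> * indicator {..<c2 powr p} s
    \<le> emeasure lebesgue {x. s < trunc_powr_above c1 p N (F x)}"
proof (cases "s < N")
  case False
  then have "{x. s < trunc_powr_above c1 p N (H x)} = {}" for H :: "real \<Rightarrow> real"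
    using \<open>0 \<le> s\<close> by (auto simp: trunc_powr_above_def)
  then show ?thesis
    using \<open>c2 powr p \<le> N\<close> False by simp
next
  case True
  have level: "{x. \<tau> < H x} \<in> sets lebesgue" if "H \<in> borel_measurable lebesgue" for H :: "real \<Rightarrow> real" and \<tau>
    using that[unfolded borel_measurable_iff_greater] by simp
  define m where "m = max c1 (s powr (1/p))"
  have trunc_level: "{x. s < trunc_powr_above c1 p N (H x)} = {x. m < H x}" if "\<And>x. 0 \<le> H x" for H
    using less_trunc_powr_above_iff[OF that \<open>0 \<le> s\<close> \<open>0 < p\<close>] True by (auto simp: m_def)
  have "emeasure lebesgue {x. m < G x} + ennreal \<epsilon> * indicator {..<c2 powr p} s
      \<le> emeasure lebesgue {x. m < F x}"
  proof (cases "s < c2 powr p")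
    case False
    then show ?thesis
      using dominated[of m] by (simp add: m_def)
  next
    case True
    then have "m < c2"
      using less_powr_iff_root_less[of s c2 p] assms(5-7,9) by (simp add: m_def)
    have "emeasure lebesgue {x. m < G x} \<le> emeasure lebesgue {x. c1 < G x}"
      by (intro emeasure_mono level G(1)) (auto simp: m_def)
    then have "emeasure lebesgue {x. m < G x} + ennreal \<epsilon> \<le> emeasure lebesgue {x. c2 < F x}"
      using gap by (meson add_right_mono order_trans)
    also have "\<dots> \<le> emeasure lebesgue {x. m < F x}"
      using \<open>m < c2\<close> by (intro emeasure_mono level F(1)) auto
    finally show ?thesis
      using True by simp
  qed
  then show ?thesis
    by (simp only: trunc_level[OF F(2)] trunc_level[OF G(2)])
qed

text \<open>Only the part of min(G^p, N) where G > c1 is compared with F through distribution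
  functions; where G \<le> c1 it is bounded by c1^(p - q) G^q.\<close>

lemma nn_integral_min_powr_compare:
  fixes F G :: "real \<Rightarrow> real" and p q c1 c2 \<epsilon> N :: real
  assumes F: "F \<in> borel_measurable lebesgue" "\<And>x. 0 \<le> F x"
    and G: "G \<in> borel_measurable lebesgue" "\<And>x. 0 \<le> G x"
    and G_int: "integrable lebesgue (\<lambda>x. G x powr q)"
    and "0 < q" "q \<le> p" "0 < c1" "c1 < c2" "0 \<le> \<epsilon>" "c2 powr p \<le> N"
    and dominated: "\<And>\<tau>. c1 \<le> \<tau> \<Longrightarrow> emeasure lebesgue {x. \<tau> < G x} \<le> emeasure lebesgue {x. \<tau> < F x}"
    and gap: "emeasure lebesgue {x. c1 < G x} + ennreal \<epsilon> \<le> emeasure lebesgue {x. c2 < F x}"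
  shows "(\<integral>\<^sup>+x. min (G x powr p) N \<partial>lebesgue) + ennreal (\<epsilon> * c2 powr p)
    \<le> ennreal (c1 powr (p - q) * (\<integral>x. G x powr q \<partial>lebesgue)) + (\<integral>\<^sup>+x. min (F x powr p) N \<partial>lebesgue)"
proof -
  let ?T = "\<lambda>H x. trunc_powr_above c1 p N (H x)" and ?K = "c1 powr (p - q) * (\<integral>x. G x powr q \<partial>lebesgue)"
  have "0 < p"
    using \<open>0 < q\<close> \<open>q \<le> p\<close> by linarith
  have "0 < c2 powr p"
    using \<open>0 < c1\<close> \<open>c1 < c2\<close> by simp
  then have "0 \<le> N"
    using \<open>c2 powr p \<le> N\<close> by linarith
  have "ennreal (min (G x powr p) N) \<le> ennreal (c1 powr (p - q) * G x powr q) + ennreal (?T G x)" for x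
    using min_powr_le_split[of "G x" q p N c1] G(2)[of x] \<open>q \<le> p\<close> trunc_powr_above_nonneg[OF \<open>0 \<le> N\<close>]
    by (simp flip: ennreal_plus)
  then have "(\<integral>\<^sup>+x. min (G x powr p) N \<partial>lebesgue)
      \<le> (\<integral>\<^sup>+x. ennreal (c1 powr (p - q) * G x powr q) + ennreal (?T G x) \<partial>lebesgue)"
    by (rule nn_integral_mono)
  also have "\<dots> = (\<integral>\<^sup>+x. ennreal (c1 powr (p - q) * G x powr q) \<partial>lebesgue) + (\<integral>\<^sup>+x. ?T G x \<partial>lebesgue)"
    using G(1) borel_measurable_trunc_powr_above[OF G(1)] by (intro nn_integral_add) auto
  also have "\<dots> = ennreal ?K + (\<integral>\<^sup>+x. ?T G x \<partial>lebesgue)"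
    using G_int by (subst nn_integral_eq_integral) auto
  finally have G_split: "(\<integral>\<^sup>+x. min (G x powr p) N \<partial>lebesgue) \<le> ennreal ?K + (\<integral>\<^sup>+x. ?T G x \<partial>lebesgue)" .
  have T_compare: "(\<integral>\<^sup>+x. ?T G x \<partial>lebesgue) + ennreal (\<epsilon> * c2 powr p) \<le> (\<integral>\<^sup>+x. ?T F x \<partial>lebesgue)"
    using emeasure_trunc_powr_above_compare[OF F G \<open>0 < p\<close> \<open>0 < c1\<close> \<open>c1 < c2\<close> \<open>c2 powr p \<le> N\<close> _
        dominated gap]
    by (intro nn_integral_add_le_by_distribution borel_measurable_trunc_powr_above F(1) G(1)
        trunc_powr_above_nonneg \<open>0 \<le> N\<close> \<open>0 \<le> \<epsilon>\<close>) simp_all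
  have F_upper: "(\<integral>\<^sup>+x. ?T F x \<partial>lebesgue) \<le> (\<integral>\<^sup>+x. min (F x powr p) N \<partial>lebesgue)"
    using \<open>0 \<le> N\<close> by (intro nn_integral_mono) (simp add: trunc_powr_above_def)
  have "(\<integral>\<^sup>+x. min (G x powr p) N \<partial>lebesgue) + ennreal (\<epsilon> * c2 powr p)
      \<le> ennreal ?K + ((\<integral>\<^sup>+x. ?T G x \<partial>lebesgue) + ennreal (\<epsilon> * c2 powr p))"
    using add_right_mono[OF G_split] by (simp only: add.assoc)
  also have "\<dots> \<le> ennreal ?K + (\<integral>\<^sup>+x. min (F x powr p) N \<partial>lebesgue)"
    using T_compare F_upper by (intro add_left_mono) (rule order_trans)
  finally show ?thesis .
qed

lemma integral_powr_diff_lower_bound: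
  fixes F G :: "real \<Rightarrow> real" and p q c1 c2 \<epsilon> :: real
  assumes F: "F \<in> borel_measurable lebesgue" "\<And>x. 0 \<le> F x"
    and G: "G \<in> borel_measurable lebesgue" "\<And>x. 0 \<le> G x"
    and G_int: "integrable lebesgue (\<lambda>x. G x powr q)"
    and diff_int: "integrable lebesgue (\<lambda>x. F x powr p - G x powr p)"
    and "0 < q" "q \<le> p" "0 < c1" "c1 < c2" "0 \<le> \<epsilon>"
    and dominated: "\<And>\<tau>. c1 \<le> \<tau> \<Longrightarrow> emeasure lebesgue {x. \<tau> < G x} \<le> emeasure lebesgue {x. \<tau> < F x}"
    and gap: "emeasure lebesgue {x. c1 < G x} + ennreal \<epsilon> \<le> emeasure lebesgue {x. c2 < F x}"
    and G_fin: "emeasure lebesgue {x. c1 < G x} < \<infinity>"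
  shows "\<epsilon> * c2 powr p - c1 powr (p - q) * (\<integral>x. G x powr q \<partial>lebesgue)
    \<le> (\<integral>x. F x powr p - G x powr p \<partial>lebesgue)"
proof -
  have FG_meas: "(\<lambda>x. F x powr p) \<in> borel_measurable lebesgue" "(\<lambda>x. G x powr p) \<in> borel_measurable lebesgue"
    using F(1) G(1) by measurable
  obtain n0 :: nat where n0: "c2 powr p \<le> real n0"
    using real_arch_simple by blast
  have "\<epsilon> * c2 powr p - c1 powr (p - q) * (\<integral>x. G x powr q \<partial>lebesgue)
      \<le> (\<integral>x. min (F x powr p) (real n) - min (G x powr p) (real n) \<partial>lebesgue)" if "n0 \<le> n" for n
  proof -
    let ?N = "real n" and ?K = "c1 powr (p - q) * (\<integral>x. G x powr q \<partial>lebesgue)"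
    have N: "c2 powr p \<le> ?N"
      using n0 that by linarith
    have G_trunc: "integrable lebesgue (\<lambda>x. min (G x powr p) ?N)"
      using integrable_min_powr[OF G G_int \<open>q \<le> p\<close> _ G_fin] by simp
    \<comment> \<open>F^p need not be integrable, but min(F^p, N) - min(G^p, N) is dominated by |F^p - G^p|.\<close>
    have "integrable lebesgue (\<lambda>x. min (G x powr p) ?N + (min (F x powr p) ?N - min (G x powr p) ?N))"
      using G_trunc integrable_min_diff[OF FG_meas diff_int] by (rule Bochner_Integration.integrable_add)
    then have F_trunc: "integrable lebesgue (\<lambda>x. min (F x powr p) ?N)"
      by simp
    have "ennreal ((\<integral>x. min (G x powr p) ?N \<partial>lebesgue) + \<epsilon> * c2 powr p)
        \<le> ennreal (?K + (\<integral>x. min (F x powr p) ?N \<partial>lebesgue))"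
      using nn_integral_min_powr_compare[OF F G G_int \<open>0 < q\<close> \<open>q \<le> p\<close> \<open>0 < c1\<close> \<open>c1 < c2\<close>
          \<open>0 \<le> \<epsilon>\<close> N dominated gap]
      using G_trunc F_trunc \<open>0 \<le> \<epsilon>\<close>
      by (simp add: nn_integral_eq_integral ennreal_plus integral_nonneg_AE)
    moreover have "0 \<le> ?K + (\<integral>x. min (F x powr p) ?N \<partial>lebesgue)"
      by (simp add: integral_nonneg_AE)
    ultimately have "(\<integral>x. min (G x powr p) ?N \<partial>lebesgue) + \<epsilon> * c2 powr p \<le> ?K + (\<integral>x. min (F x powr p) ?N \<partial>lebesgue)"
      by (simp only: ennreal_le_iff)
    then show ?thesis
      using F_trunc G_trunc by (simp add: Bochner_Integration.integral_diff)
  qed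
  then show ?thesis
    by (intro LIMSEQ_le_const[OF tendsto_integral_min_diff[OF FG_meas diff_int]]) auto
qed

lemma set_integral_powr_diff_lower_bound:
  fixes f g :: "real \<Rightarrow> real" and p q c1 c2 \<epsilon> :: real
  assumes f: "in_Lp q f" and g: "in_Lp q g"
    and "0 < q" "q \<le> p" "0 < c1" "c1 < c2" "0 \<le> \<epsilon>"
    and dominated: "\<And>\<tau>. c1 \<le> \<tau> \<Longrightarrow> emeasure lebesgue (superlevel g \<tau>) \<le> emeasure lebesgue (superlevel f \<tau>)"
    and gap: "emeasure lebesgue (superlevel g c1) + ennreal \<epsilon> \<le> emeasure lebesgue (superlevel f c2)"
    and diff_int: "set_integrable lebesgue {0<..} (\<lambda>t. \<bar>f t\<bar> powr p - \<bar>g t\<bar> powr p)"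
  shows "\<epsilon> * c2 powr p - c1 powr (p - q) * (LINT t:{0<..}|lebesgue. \<bar>g t\<bar> powr q)
    \<le> (LINT t:{0<..}|lebesgue. \<bar>f t\<bar> powr p - \<bar>g t\<bar> powr p)"
proof -
  have diff_eq: "(\<lambda>x. abs_on_pos f x powr p - abs_on_pos g x powr p)
      = (\<lambda>x. indicator {0<..} x *\<^sub>R (\<bar>f x\<bar> powr p - \<bar>g x\<bar> powr p))"
    by (simp add: abs_on_pos_powr right_diff_distrib)
  have g_eq: "(\<integral>x. abs_on_pos g x powr q \<partial>lebesgue) = (LINT t:{0<..}|lebesgue. \<bar>g t\<bar> powr q)"
    by (simp add: set_lebesgue_integral_def abs_on_pos_powr)
  have diff_integral_eq: "(\<integral>x. abs_on_pos f x powr p - abs_on_pos g x powr p \<partial>lebesgue)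
      = (LINT t:{0<..}|lebesgue. \<bar>f t\<bar> powr p - \<bar>g t\<bar> powr p)"
    unfolding set_lebesgue_integral_def diff_eq ..
  have "\<epsilon> * c2 powr p - c1 powr (p - q) * (\<integral>x. abs_on_pos g x powr q \<partial>lebesgue)
      \<le> (\<integral>x. abs_on_pos f x powr p - abs_on_pos g x powr p \<partial>lebesgue)"
  proof (rule integral_powr_diff_lower_bound[OF borel_measurable_abs_on_pos[OF f] abs_on_pos_nonneg
        borel_measurable_abs_on_pos[OF g] abs_on_pos_nonneg integrable_abs_on_pos_powr[OF g]])
    show "integrable lebesgue (\<lambda>x. abs_on_pos f x powr p - abs_on_pos g x powr p)"
      using diff_int by (simp add: diff_eq set_integrable_def)
    show "emeasure lebesgue {x. \<tau> < abs_on_pos g x} \<le> emeasure lebesgue {x. \<tau> < abs_on_pos f x}"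
      if "c1 \<le> \<tau>" for \<tau>
      using dominated[OF that] that \<open>0 < c1\<close> by (simp add: superlevel_eq_abs_on_pos_nonneg)
    show "emeasure lebesgue {x. c1 < abs_on_pos g x} + ennreal \<epsilon> \<le> emeasure lebesgue {x. c2 < abs_on_pos f x}"
      using gap \<open>0 < c1\<close> \<open>c1 < c2\<close> by (simp add: superlevel_eq_abs_on_pos_nonneg)
    show "emeasure lebesgue {x. c1 < abs_on_pos g x} < \<infinity>"
      using emeasure_superlevel_finite[OF g \<open>0 < q\<close> \<open>0 < c1\<close>] \<open>0 < c1\<close>
      by (simp add: superlevel_eq_abs_on_pos_nonneg)
  qed (use assms(3-7) in auto)
  then show ?thesis
    unfolding g_eq diff_integral_eq .
qed

theorem mainTheorem18:
  fixes f g :: "real \<Rightarrow> real" and p0 t0 :: real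
  assumes "1 \<le> p0" and "0 < t0"
    and "in_Lp p0 f" and "in_Lp p0 g"
    and "rearr f t0 > rearr g t0"
    and "\<And>t. 0 < t \<Longrightarrow> t < t0 \<Longrightarrow> rearr f t \<ge> rearr g t"
    and "\<not> bdd_above {p::real. p > 0 \<and>
            set_integrable lebesgue {0<..} (\<lambda>t. \<bar>f t\<bar> powr p - \<bar>g t\<bar> powr p)}"
  shows "\<exists>P1. \<forall>p. (p > 0 \<and>
            set_integrable lebesgue {0<..} (\<lambda>t. \<bar>f t\<bar> powr p - \<bar>g t\<bar> powr p)
            \<and> p \<ge> P1) \<longrightarrow>
          (LINT t:{0<..}|lebesgue. \<bar>f t\<bar> powr p - \<bar>g t\<bar> powr p) > 0"
proof -
  have "0 < p0"
    using assms(1) by simp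
  obtain c1 c2 \<epsilon> where c: "0 < c1" "c1 < c2" "0 < \<epsilon>"
    and dominated: "\<And>\<tau>. c1 \<le> \<tau> \<Longrightarrow> emeasure lebesgue (superlevel g \<tau>) \<le> emeasure lebesgue (superlevel f \<tau>)"
    and gap: "emeasure lebesgue (superlevel g c1) + ennreal \<epsilon> \<le> emeasure lebesgue (superlevel f c2)"
    using levels_between_rearr[OF assms(3,4) \<open>0 < p0\<close> assms(2,5,6)] by blast
  define K where "K = (LINT t:{0<..}|lebesgue. \<bar>g t\<bar> powr p0) / c1 powr p0"
  obtain P where P: "\<And>p. P \<le> p \<Longrightarrow> K * c1 powr p < \<epsilon> * c2 powr p"
    using powr_dominates_eventually[where K = K, OF c] by blast
  have "0 < (LINT t:{0<..}|lebesgue. \<bar>f t\<bar> powr p - \<bar>g t\<bar> powr p)"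
    if "set_integrable lebesgue {0<..} (\<lambda>t. \<bar>f t\<bar> powr p - \<bar>g t\<bar> powr p)" "max p0 P \<le> p" for p
  proof -
    have "\<epsilon> * c2 powr p - K * c1 powr p \<le> (LINT t:{0<..}|lebesgue. \<bar>f t\<bar> powr p - \<bar>g t\<bar> powr p)"
      using set_integral_powr_diff_lower_bound[OF assms(3,4) \<open>0 < p0\<close> _ c(1,2) _ dominated gap that(1)]
        that(2) c by (simp add: K_def powr_diff mult.commute)
    then show ?thesis
      using P[of p] that(2) by simp
  qed
  then show ?thesis
    by blast
qed

end
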